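(* Let $|\mathfrak{X}|\ge2$ and let $\mathbf{D}^{(1)}$ be an $(m_n,n,\mathbf{P})$ unlabeled Markov database. Define the collapsed database $\tilde{\mathbf{D}}^{(1)}$ by $\tilde D^{(1)}_{i,j}=1$ if $D^{(1)}_{i,j}=1$ and $\tilde D^{(1)}_{i,j}=2$ otherwise, and the column histograms $\tilde H^{(1)}_j=\sum_{i=1}^{m_n}\mathbb{1}[\tilde D^{(1)}_{i,j}=2]$ for $j\in[n]$. If $m_n=\omega(n^4)$, then $$\Pr\big(\exists\, i,j\in[n],\ i\neq j,\ \tilde H^{(1)}_i=\tilde H^{(1)}_j\big)\to0\quad\text{as } n\to\infty.$$
   Context: Unlabeled Markov database: for a finite alphabet $\mathfrak{X}=\{1,\dots,|\mathfrak{X}|\}$, an $(m_n,n,\mathbf{P})$ unlabeled Markov database is a random $m_n\times n$ matrix $\mathbf{D}=(D_{i,j})$ with entries in $\mathfrak{X}$ whose rows are i.i.d., each row being a first-order stationary Markov chain $(D_{i,1},\dots,D_{i,n})$ with $D_{i,1}\sim\pi=[u_1,\dots,u_{|\mathfrak{X}|}]$ and transition matrix $\mathbf{P}=\gamma\mathbf{I}+(1-\gamma)\mathbf{U}$, where $\mathbf{I}$ is the identity, $U_{i,j}=u_j>0$ for all $i,j$, $\sum_j u_j=1$, and $\gamma\in\big(-\min_j\frac{u_j}{1-u_j},1\big)$; $\pi$ is the stationary distribution of $\mathbf{P}$. *)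

theory Defs
  imports Complex_Main "HOL-Library.FuncSet" "HOL-Library.Landau_Symbols"
begin

text \<open>Alphabet is {1..K}. The stationary distribution is u (u j for j in {1..K}).
  Transition matrix P = gamma I + (1-gamma) U with U a b = u b.\<close>

definition trans_prob :: "real \<Rightarrow> (nat \<Rightarrow> real) \<Rightarrow> nat \<Rightarrow> nat \<Rightarrow> real" where
  "trans_prob \<gamma> u a b = \<gamma> * (if a = b then 1 else 0) + (1 - \<gamma>) * u b"

definition row_prob :: "real \<Rightarrow> (nat \<Rightarrow> real) \<Rightarrow> nat \<Rightarrow> (nat \<Rightarrow> nat) \<Rightarrow> real" where
  "row_prob \<gamma> u n x = u (x 1) * (\<Prod>j\<in>{1..<n}. trans_prob \<gamma> u (x j) (x (Suc j)))"

definition databases :: "nat \<Rightarrow> nat \<Rightarrow> nat \<Rightarrow> (nat \<Rightarrow> nat \<Rightarrow> nat) set" where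
  "databases K m n = PiE {1..m} (\<lambda>_. PiE {1..n} (\<lambda>_. {1..K}))"

definition db_prob :: "real \<Rightarrow> (nat \<Rightarrow> real) \<Rightarrow> nat \<Rightarrow> nat \<Rightarrow> (nat \<Rightarrow> nat \<Rightarrow> nat) \<Rightarrow> real" where
  "db_prob \<gamma> u m n D = (\<Prod>i\<in>{1..m}. row_prob \<gamma> u n (D i))"

definition collapse :: "(nat \<Rightarrow> nat \<Rightarrow> nat) \<Rightarrow> nat \<Rightarrow> nat \<Rightarrow> nat" where
  "collapse D i j = (if D i j = 1 then 1 else 2)"

definition col_hist :: "nat \<Rightarrow> (nat \<Rightarrow> nat \<Rightarrow> nat) \<Rightarrow> nat \<Rightarrow> nat" where
  "col_hist m D j = card {i \<in> {1..m}. collapse D i j = 2}"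

definition collision_prob :: "nat \<Rightarrow> real \<Rightarrow> (nat \<Rightarrow> real) \<Rightarrow> nat \<Rightarrow> nat \<Rightarrow> real" where
  "collision_prob K \<gamma> u m n =
     (\<Sum>D\<in>{D \<in> databases K m n. \<exists>i\<in>{1..n}. \<exists>j\<in>{1..n}. i \<noteq> j \<and> col_hist m D i = col_hist m D j}.
        db_prob \<gamma> u m n D)"

end

theory Submission
  imports Defs "HOL-Analysis.Convex"
begin

text \<open>
  Fix columns \<open>i < j\<close> and put \<open>f x = [x i \<noteq> 1] - [x j \<noteq> 1]\<close> for a row \<open>x\<close>. The collapsed
  histograms of the two columns agree iff as many rows have \<open>f = 1\<close> as \<open>f = -1\<close>. The rows are
  i.i.d., and \<open>f \<noteq> 0\<close> has probability at least \<open>u 1 * u 2 * (1 - \<bar>\<gamma>\<bar>)\<close>, because the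
  \<open>k\<close>-step transition matrix is \<open>\<gamma>^k I + (1 - \<gamma>^k) U\<close>. Given the \<open>N\<close> rows with \<open>f \<noteq> 0\<close>, the
  signs balance with probability at most \<open>binomial (N, N/2) p^(N/2) q^(N/2) / (p + q)^N \<le>
  sqrt (2 / (N + 1))\<close>, and averaging over the binomially distributed \<open>N\<close> (Jensen) gives
  \<open>O(1 / sqrt m)\<close>. A union bound over the fewer than \<open>n^2\<close> pairs of columns bounds the
  collision probability by \<open>O(n^2 / sqrt m)\<close>, which tends to \<open>0\<close> when \<open>m = \<omega>(n^4)\<close>.
\<close>

section \<open>Finite sums and binomial estimates\<close>

lemma sum_of_bool_eq_mult:
  assumes "finite S" "b \<in> S"
  shows "(\<Sum>a\<in>S. of_bool (a = b) * f a) = (f b :: real)"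
proof -
  have "(\<Sum>a\<in>S. of_bool (a = b) * f a) = (\<Sum>a\<in>S. if a = b then f a else 0)"
    by (intro sum.cong) auto
  then show ?thesis
    using assms by simp
qed

lemma sum_of_bool_bex_le:
  fixes w :: "'a \<Rightarrow> real"
  assumes "finite I" "\<forall>x\<in>S. w x \<ge> 0"
  shows "(\<Sum>x\<in>S. w x * of_bool (\<exists>i\<in>I. Q i x)) \<le> (\<Sum>i\<in>I. \<Sum>x\<in>S. w x * of_bool (Q i x))"
proof -
  have "w x * of_bool (\<exists>i\<in>I. Q i x) \<le> (\<Sum>i\<in>I. w x * of_bool (Q i x))" if "x \<in> S" for x
  proof (cases "\<exists>i\<in>I. Q i x")
    case True
    then obtain i where "i \<in> I" "Q i x" by blast
    then show ?thesis
      using assms that by (intro member_le_sum[of i, THEN order.trans[rotated]]) auto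
  qed (use assms that in \<open>auto intro: sum_nonneg\<close>)
  then have "(\<Sum>x\<in>S. w x * of_bool (\<exists>i\<in>I. Q i x)) \<le> (\<Sum>x\<in>S. \<Sum>i\<in>I. w x * of_bool (Q i x))"
    by (rule sum_mono)
  then show ?thesis
    by (subst sum.swap)
qed

lemma card_eq_iff_card_diff_eq:
  assumes "finite A"
  shows "card {k\<in>A. p k} = card {k\<in>A. q k} \<longleftrightarrow> card {k\<in>A. p k \<and> \<not> q k} = card {k\<in>A. q k \<and> \<not> p k}"
proof -
  have "card {k\<in>A. p k} = card {k\<in>A. p k \<and> \<not> q k} + card {k\<in>A. p k \<and> q k}"
    using assms by (subst card_Un_disjoint[symmetric]) (auto intro: arg_cong[where f = card])
  moreover have "card {k\<in>A. q k} = card {k\<in>A. q k \<and> \<not> p k} + card {k\<in>A. p k \<and> q k}"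
    using assms by (subst card_Un_disjoint[symmetric]) (auto intro: arg_cong[where f = card])
  ultimately show ?thesis by simp
qed

lemma sum_Pow_card:
  assumes "finite E"
  shows "(\<Sum>P\<in>Pow E. g (card P)) = (\<Sum>k\<le>card E. of_nat (card E choose k) * g k)"
proof -
  have "(\<Sum>P\<in>Pow E. g (card P)) = (\<Sum>k\<le>card E. \<Sum>P\<in>{P\<in>Pow E. card P = k}. g (card P))"
    using assms by (intro sum.group[symmetric]) (auto intro: card_mono)
  also have "\<dots> = (\<Sum>k\<le>card E. of_nat (card E choose k) * g k)"
  proof (intro sum.cong refl)
    fix k
    have "{P\<in>Pow E. card P = k} = {P. P \<subseteq> E \<and> card P = k}" by auto
    then show "(\<Sum>P\<in>{P\<in>Pow E. card P = k}. g (card P)) = of_nat (card E choose k) * g k"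
      using n_subsets[OF assms, of k] by simp
  qed
  finally show ?thesis .
qed

lemma Suc_times_central_binomial_Suc:
  "Suc h * ((2 * Suc h) choose Suc h) = 2 * (2 * h + 1) * ((2 * h) choose h)"
  by (metis Suc_eq_plus1 Suc_times_binomial Suc_times_binomial_add add_2_eq_Suc
      add_mult_distrib mult_Suc_right nat_mult_1 one_add_one)

lemma central_binomial_sq_le: "((2 * h) choose h)^2 * (h + 1) \<le> (16::nat) ^ h"
proof (induction h)
  case 0
  then show ?case by simp
next
  case (Suc h)
  let ?c = "(2 * h) choose h" and ?d = "(2 * Suc h) choose Suc h"
  have "(Suc h)^2 * (?d^2 * (Suc h + 1)) = (Suc h * ?d)^2 * (h + 2)"
    by (simp add: power2_eq_square algebra_simps)
  also have "\<dots> = 4 * (2 * h + 1)^2 * (h + 2) * ?c^2"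
    by (simp only: Suc_times_central_binomial_Suc) (simp add: power2_eq_square algebra_simps)
  also have "\<dots> \<le> 16 * (h + 1)^3 * ?c^2"
    by (intro mult_right_mono) (simp_all add: power2_eq_square power3_eq_cube algebra_simps)
  also have "\<dots> = 16 * (h + 1)^2 * (?c^2 * (h + 1))"
    by (simp add: power2_eq_square power3_eq_cube algebra_simps)
  also have "\<dots> \<le> (Suc h)^2 * 16 ^ Suc h"
    using Suc.IH by simp
  finally show ?case by (simp del: power_Suc)
qed

lemma central_binomial_le: "real ((2 * h) choose h) \<le> 4 ^ h / sqrt (h + 1)"
proof -
  have "real ((2 * h) choose h)^2 * (real h + 1) \<le> 16 ^ h"
    using central_binomial_sq_le[of h] by (metis of_nat_le_iff of_nat_Suc of_nat_mult of_nat_numeral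
        of_nat_power Suc_eq_plus1 add.commute)
  also have "(16::real) ^ h = (4 ^ h)^2"
    by (simp add: power2_eq_square flip: power_mult_distrib)
  finally have "sqrt (real ((2 * h) choose h)^2 * (real h + 1)) \<le> 4 ^ h"
    using real_le_lsqrt by fastforce
  then have "real ((2 * h) choose h) * sqrt (real h + 1) \<le> 4 ^ h"
    by (simp add: real_sqrt_mult)
  then show ?thesis by (simp add: field_simps add.commute)
qed

lemma binomial_balanced_sum_le:
  fixes a b :: real
  assumes "a \<ge> 0" "b \<ge> 0"
  shows "(\<Sum>k\<le>N. of_nat (N choose k) * (a^k * b^(N - k) * of_bool (k = N - k)))
           \<le> (a + b)^N * sqrt (2 / (real N + 1))"
proof (cases "even N")
  case False
  then have "k \<noteq> N - k" for k by presburger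
  then show ?thesis using assms by simp
next
  case True
  then obtain h where N: "N = 2 * h" by blast
  have "(\<Sum>k\<le>N. of_nat (N choose k) * (a^k * b^(N - k) * of_bool (k = N - k)))
      = (\<Sum>k\<le>N. if k = h then of_nat (N choose h) * (a^h * b^h) else 0)"
    using N by (intro sum.cong) auto
  also have "\<dots> = real ((2 * h) choose h) * (a * b)^h"
    using N by (simp add: power_mult_distrib)
  also have "\<dots> \<le> 4^h / sqrt (h + 1) * (a * b)^h"
    using central_binomial_le[of h] assms by (intro mult_right_mono) auto
  also have "\<dots> = (4 * (a * b))^h / sqrt (h + 1)"
    by (simp add: power_mult_distrib)
  also have "\<dots> \<le> ((a + b)^2)^h / sqrt (h + 1)"
    using assms sum_squares_ge_zero[of "a - b" 0]
    by (intro divide_right_mono power_mono) (auto simp: power2_eq_square algebra_simps)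
  also have "\<dots> = (a + b)^N * sqrt (1 / (real h + 1))"
    using N by (simp add: power_mult real_sqrt_divide add.commute)
  also have "\<dots> \<le> (a + b)^N * sqrt (2 / (real N + 1))"
    using N assms by (intro mult_left_mono real_sqrt_le_mono) (auto simp: field_simps)
  finally show ?thesis .
qed

lemma weighted_sum_sqrt_le:
  fixes w y :: "'a \<Rightarrow> real"
  assumes "\<forall>i\<in>I. w i \<ge> 0" "\<forall>i\<in>I. y i \<ge> 0" "sum w I \<le> 1"
  shows "(\<Sum>i\<in>I. w i * sqrt (y i)) \<le> sqrt (\<Sum>i\<in>I. w i * y i)"
proof -
  have "(\<Sum>i\<in>I. w i * sqrt (y i))^2 = (\<Sum>i\<in>I. sqrt (w i) * (sqrt (w i) * sqrt (y i)))^2"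
    using assms by (intro arg_cong[where f = "\<lambda>t. t^2"] sum.cong) (auto simp flip: mult.assoc)
  also have "\<dots> \<le> (\<Sum>i\<in>I. (sqrt (w i))^2) * (\<Sum>i\<in>I. (sqrt (w i) * sqrt (y i))^2)"
    by (rule Cauchy_Schwarz_ineq_sum)
  also have "\<dots> = sum w I * (\<Sum>i\<in>I. w i * y i)"
    using assms by (intro arg_cong2[where f = "(*)"] sum.cong) (auto simp: power_mult_distrib)
  also have "\<dots> \<le> (\<Sum>i\<in>I. w i * y i)"
    using assms by (intro mult_left_le_one_le sum_nonneg) auto
  finally show ?thesis by (rule real_le_rsqrt)
qed

lemma binomial_sum_divide_Suc_le:
  fixes q r :: real
  assumes "q \<ge> 0" "r > 0"
  shows "(\<Sum>N\<le>m. of_nat (m choose N) * q^(m - N) * r^N / (real N + 1))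
           \<le> (q + r)^Suc m / ((real m + 1) * r)"
proof -
  have "(\<Sum>N\<le>m. of_nat (m choose N) * q^(m - N) * r^N / (real N + 1))
      = (\<Sum>N\<le>m. of_nat (Suc m choose Suc N) * r^Suc N * q^(Suc m - Suc N)) / ((real m + 1) * r)"
    unfolding sum_divide_distrib
  proof (intro sum.cong refl)
    fix N
    have binomial: "real (Suc m choose Suc N) = (real m + 1) * real (m choose N) / (real N + 1)"
      using Suc_times_binomial_eq[of m N]
      by (simp add: field_simps del: binomial_Suc_Suc flip: of_nat_mult)
    show "of_nat (m choose N) * q^(m - N) * r^N / (real N + 1)
        = of_nat (Suc m choose Suc N) * r^Suc N * q^(Suc m - Suc N) / ((real m + 1) * r)"
      unfolding binomial using assms
      by (simp add: divide_simps del: binomial_Suc_Suc)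
  qed
  also have "\<dots> \<le> (\<Sum>N\<le>Suc m. of_nat (Suc m choose N) * r^N * q^(Suc m - N)) / ((real m + 1) * r)"
    unfolding sum.atMost_Suc_shift[of _ m] using assms by (intro divide_right_mono) auto
  also have "\<dots> = (r + q)^Suc m / ((real m + 1) * r)"
    by (simp only: binomial_ring)
  finally show ?thesis by (simp only: add.commute)
qed

lemma binomial_sum_sqrt_le:
  fixes q r :: real
  assumes "q \<ge> 0" "r > 0" "q + r \<le> 1"
  shows "(\<Sum>N\<le>m. of_nat (m choose N) * q^(m - N) * r^N * sqrt (2 / (real N + 1)))
           \<le> sqrt (2 / ((real m + 1) * r))"
proof -
  define w where "w N = of_nat (m choose N) * q^(m - N) * r^N" for N
  have w_sum: "sum w {..m} = (q + r)^m"
    using binomial_ring[of r q m] by (simp add: w_def add.commute mult_ac)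
  have "(\<Sum>N\<le>m. w N * sqrt (2 / (real N + 1))) \<le> sqrt (\<Sum>N\<le>m. w N * (2 / (real N + 1)))"
    using assms w_sum by (intro weighted_sum_sqrt_le) (auto simp: w_def power_le_one)
  also have "(\<Sum>N\<le>m. w N * (2 / (real N + 1))) = 2 * (\<Sum>N\<le>m. w N / (real N + 1))"
    by (simp add: sum_distrib_left field_simps)
  also have "\<dots> \<le> 2 * ((q + r)^Suc m / ((real m + 1) * r))"
    using binomial_sum_divide_Suc_le[OF assms(1,2), of m] by (simp add: w_def)
  also have "\<dots> \<le> 2 * (1 / ((real m + 1) * r))"
    using assms by (intro mult_left_mono divide_right_mono power_le_one) auto
  finally show ?thesis
    by (simp add: w_def real_sqrt_le_mono)
qed

section \<open>Anticoncentration of i.i.d.\ sign counts\<close>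

lemma sum_PiE_prod_comp:
  fixes w :: "'a \<Rightarrow> real" and f :: "'a \<Rightarrow> 'c" and g :: "('b \<Rightarrow> 'c) \<Rightarrow> real"
  assumes "finite A" "finite R" "finite S" "f ` R \<subseteq> S"
  shows "(\<Sum>D\<in>PiE A (\<lambda>_. R). (\<Prod>k\<in>A. w (D k)) * g (\<lambda>k\<in>A. f (D k)))
       = (\<Sum>s\<in>PiE A (\<lambda>_. S). (\<Prod>k\<in>A. sum w {x\<in>R. f x = s k}) * g s)"
proof -
  have "(\<Sum>D\<in>PiE A (\<lambda>_. R). (\<Prod>k\<in>A. w (D k)) * g (\<lambda>k\<in>A. f (D k)))
      = (\<Sum>s\<in>PiE A (\<lambda>_. S). \<Sum>D\<in>{D\<in>PiE A (\<lambda>_. R). (\<lambda>k\<in>A. f (D k)) = s}.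
            (\<Prod>k\<in>A. w (D k)) * g (\<lambda>k\<in>A. f (D k)))"
    using assms by (intro sum.group[symmetric]) (auto simp: finite_PiE PiE_iff image_subset_iff)
  also have "\<dots> = (\<Sum>s\<in>PiE A (\<lambda>_. S). (\<Prod>k\<in>A. sum w {x\<in>R. f x = s k}) * g s)"
  proof (intro sum.cong refl)
    fix s assume s: "s \<in> PiE A (\<lambda>_. S)"
    have fibre: "{D\<in>PiE A (\<lambda>_. R). (\<lambda>k\<in>A. f (D k)) = s} = PiE A (\<lambda>k. {x\<in>R. f x = s k})"
      using s by (fastforce simp: PiE_iff fun_eq_iff extensional_def)
    have "(\<Sum>D\<in>PiE A (\<lambda>k. {x\<in>R. f x = s k}). (\<Prod>k\<in>A. w (D k)) * g (\<lambda>k\<in>A. f (D k)))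
        = (\<Sum>D\<in>PiE A (\<lambda>k. {x\<in>R. f x = s k}). \<Prod>k\<in>A. w (D k)) * g s"
      unfolding sum_distrib_right using s
      by (intro sum.cong refl arg_cong2[where f = "(*)"] arg_cong[where f = g])
        (auto simp: PiE_iff fun_eq_iff extensional_def)
    also have "\<dots> = (\<Prod>k\<in>A. sum w {x\<in>R. f x = s k}) * g s"
      using assms by (subst prod_sum_PiE) auto
    finally show "(\<Sum>D\<in>{D\<in>PiE A (\<lambda>_. R). (\<lambda>k\<in>A. f (D k)) = s}. (\<Prod>k\<in>A. w (D k)) * g (\<lambda>k\<in>A. f (D k)))
        = (\<Prod>k\<in>A. sum w {x\<in>R. f x = s k}) * g s"
      unfolding fibre .
  qed
  finally show ?thesis .
qed

text \<open>A sign vector is determined by its support \<open>E\<close> and its set \<open>P \<subseteq> E\<close> of positive entries.\<close>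
lemma sum_sign_vectors_balanced:
  fixes Q :: "int \<Rightarrow> real"
  assumes "finite A"
  shows "(\<Sum>s\<in>PiE A (\<lambda>_. {-1, 0, 1}). (\<Prod>k\<in>A. Q (s k))
            * of_bool (card {k\<in>A. s k = 1} = card {k\<in>A. s k = -1}))
       = (\<Sum>E\<in>Pow A. Q 0 ^ (card A - card E) * (\<Sum>P\<in>Pow E.
            Q 1 ^ card P * Q (-1) ^ (card E - card P) * of_bool (card P = card E - card P)))"
proof -
  define sign where "sign = (\<lambda>(E, P). \<lambda>k\<in>A. if k \<in> P then 1 else if k \<in> E then -1 else (0::int))"
  have "bij_betw sign (Sigma (Pow A) Pow) (PiE A (\<lambda>_. {-1, 0, 1}))"
    by (rule bij_betw_byWitness[where f' = "\<lambda>s. ({k\<in>A. s k \<noteq> 0}, {k\<in>A. s k = 1})"])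
      (fastforce simp: sign_def PiE_iff fun_eq_iff extensional_def split: if_splits)+
  then have "(\<Sum>s\<in>PiE A (\<lambda>_. {-1, 0, 1}). (\<Prod>k\<in>A. Q (s k))
            * of_bool (card {k\<in>A. s k = 1} = card {k\<in>A. s k = -1}))
      = (\<Sum>(E, P)\<in>Sigma (Pow A) Pow. (\<Prod>k\<in>A. Q (sign (E, P) k))
            * of_bool (card {k\<in>A. sign (E, P) k = 1} = card {k\<in>A. sign (E, P) k = -1}))"
    by (simp add: sum.reindex_bij_betw[symmetric] case_prod_beta')
  also have "\<dots> = (\<Sum>(E, P)\<in>Sigma (Pow A) Pow.
      Q 0 ^ (card A - card E) * (Q 1 ^ card P * Q (-1) ^ (card E - card P) * of_bool (card P = card E - card P)))"
  proof (intro sum.cong refl, clarify)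
    fix E P assume EA: "E \<subseteq> A" and PE: "P \<subseteq> E"
    have fin: "finite E" "finite P"
      using EA PE assms by (auto intro: finite_subset)
    have "(\<Prod>k\<in>A. Q (sign (E, P) k)) = (\<Prod>k\<in>A - E. Q (sign (E, P) k))
        * ((\<Prod>k\<in>E - P. Q (sign (E, P) k)) * (\<Prod>k\<in>P. Q (sign (E, P) k)))"
      using assms fin by (simp add: prod.subset_diff[OF EA] prod.subset_diff[OF PE])
    also have "\<dots> = (\<Prod>k\<in>A - E. Q 0) * ((\<Prod>k\<in>E - P. Q (-1)) * (\<Prod>k\<in>P. Q 1))"
      using EA PE by (intro arg_cong2[where f = "(*)"] prod.cong) (auto simp: sign_def)
    finally have "(\<Prod>k\<in>A. Q (sign (E, P) k)) = (\<Prod>k\<in>A - E. Q 0) * ((\<Prod>k\<in>E - P. Q (-1)) * (\<Prod>k\<in>P. Q 1))" .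
    moreover have "{k\<in>A. sign (E, P) k = 1} = P" "{k\<in>A. sign (E, P) k = -1} = E - P"
      using EA PE by (auto simp: sign_def)
    ultimately show "(\<Prod>k\<in>A. Q (sign (E, P) k))
            * of_bool (card {k\<in>A. sign (E, P) k = 1} = card {k\<in>A. sign (E, P) k = -1})
        = Q 0 ^ (card A - card E) * (Q 1 ^ card P * Q (-1) ^ (card E - card P) * of_bool (card P = card E - card P))"
      using assms EA PE fin by (simp add: card_Diff_subset mult_ac)
  qed
  also have "\<dots> = (\<Sum>E\<in>Pow A. Q 0 ^ (card A - card E) * (\<Sum>P\<in>Pow E.
            Q 1 ^ card P * Q (-1) ^ (card E - card P) * of_bool (card P = card E - card P)))"
    unfolding sum_distrib_left using assms by (subst sum.Sigma) (auto intro: finite_subset)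
  finally show ?thesis .
qed

lemma sum_sign_vectors_balanced_le:
  fixes Q :: "int \<Rightarrow> real"
  assumes "finite A" and "Q 0 \<ge> 0" "Q 1 \<ge> 0" "Q (-1) \<ge> 0" and "Q 0 + Q 1 + Q (-1) \<le> 1"
    and "0 < r" "r \<le> Q 1 + Q (-1)"
  shows "(\<Sum>s\<in>PiE A (\<lambda>_. {-1, 0, 1}). (\<Prod>k\<in>A. Q (s k))
            * of_bool (card {k\<in>A. s k = 1} = card {k\<in>A. s k = -1}))
           \<le> sqrt (2 / ((real (card A) + 1) * r))"
proof -
  let ?q = "Q 1 + Q (-1)"
  have inner: "(\<Sum>P\<in>Pow E. Q 1 ^ card P * Q (-1) ^ (card E - card P) * of_bool (card P = card E - card P))
      \<le> ?q ^ card E * sqrt (2 / (real (card E) + 1))" if "E \<in> Pow A" for E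
  proof -
    have "finite E"
      using that assms(1) by (auto intro: finite_subset)
    then have "(\<Sum>P\<in>Pow E. Q 1 ^ card P * Q (-1) ^ (card E - card P) * of_bool (card P = card E - card P))
        = (\<Sum>k\<le>card E. of_nat (card E choose k) * (Q 1 ^ k * Q (-1) ^ (card E - k) * of_bool (k = card E - k)))"
      by (rule sum_Pow_card)
    also have "\<dots> \<le> ?q ^ card E * sqrt (2 / (real (card E) + 1))"
      using assms by (intro binomial_balanced_sum_le) auto
    finally show ?thesis .
  qed
  have "(\<Sum>s\<in>PiE A (\<lambda>_. {-1, 0, 1}). (\<Prod>k\<in>A. Q (s k))
            * of_bool (card {k\<in>A. s k = 1} = card {k\<in>A. s k = -1}))
      \<le> (\<Sum>E\<in>Pow A. Q 0 ^ (card A - card E) * (?q ^ card E * sqrt (2 / (real (card E) + 1))))"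
    unfolding sum_sign_vectors_balanced[OF assms(1)]
    using assms inner by (intro sum_mono mult_left_mono) auto
  also have "\<dots> = (\<Sum>N\<le>card A. of_nat (card A choose N) * Q 0 ^ (card A - N) * ?q ^ N
      * sqrt (2 / (real N + 1)))"
    using sum_Pow_card[OF assms(1), of "\<lambda>k. Q 0 ^ (card A - k) * (?q ^ k * sqrt (2 / (real k + 1)))"]
    by (simp add: mult_ac)
  also have "\<dots> \<le> sqrt (2 / ((real (card A) + 1) * ?q))"
    using assms by (intro binomial_sum_sqrt_le) auto
  also have "\<dots> \<le> sqrt (2 / ((real (card A) + 1) * r))"
    using assms by (intro real_sqrt_le_mono divide_left_mono mult_left_mono mult_pos_pos) auto
  finally show ?thesis .
qed

lemma prob_balanced_signs_le:
  fixes w :: "'a \<Rightarrow> real" and f :: "'a \<Rightarrow> int"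
  assumes "finite A" "finite R" "\<forall>x\<in>R. w x \<ge> 0" "f ` R \<subseteq> {-1, 0, 1}" "sum w R \<le> 1"
    and "0 < r" "r \<le> sum w {x\<in>R. f x \<noteq> 0}"
  shows "(\<Sum>D\<in>PiE A (\<lambda>_. R). (\<Prod>k\<in>A. w (D k))
            * of_bool (card {k\<in>A. f (D k) = 1} = card {k\<in>A. f (D k) = -1}))
           \<le> sqrt (2 / ((real (card A) + 1) * r))"
proof -
  define Q where "Q t = sum w {x\<in>R. f x = t}" for t
  have Q_nonneg: "Q t \<ge> 0" for t
    unfolding Q_def using assms(3) by (intro sum_nonneg) auto
  have "sum w R = (\<Sum>t\<in>{-1, 0, 1}. Q t)"
    unfolding Q_def using assms(2,4) by (intro sum.group[symmetric]) auto
  then have Q_sum: "Q 0 + Q 1 + Q (-1) \<le> 1"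
    using assms(5) by simp
  have nonzero: "{x\<in>R. f x \<noteq> 0} = {x\<in>R. f x = 1} \<union> {x\<in>R. f x = -1}"
    using assms(4) by auto
  have "sum w {x\<in>R. f x \<noteq> 0} = Q 1 + Q (-1)"
    unfolding Q_def nonzero using assms(2) by (intro sum.union_disjoint) auto
  then have Q_nonzero: "r \<le> Q 1 + Q (-1)"
    using assms(7) by simp
  have "(\<Sum>D\<in>PiE A (\<lambda>_. R). (\<Prod>k\<in>A. w (D k))
            * of_bool (card {k\<in>A. f (D k) = 1} = card {k\<in>A. f (D k) = -1}))
      = (\<Sum>s\<in>PiE A (\<lambda>_. {-1, 0, 1}). (\<Prod>k\<in>A. Q (s k))
            * of_bool (card {k\<in>A. s k = 1} = card {k\<in>A. s k = -1}))"
    using sum_PiE_prod_comp[OF assms(1,2) _ assms(4), of w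
      "\<lambda>s. of_bool (card {k\<in>A. s k = 1} = card {k\<in>A. s k = -1})"]
    by (simp add: Q_def cong: conj_cong)
  also have "\<dots> \<le> sqrt (2 / ((real (card A) + 1) * r))"
    using assms Q_nonneg Q_sum Q_nonzero by (intro sum_sign_vectors_balanced_le) auto
  finally show ?thesis .
qed

section \<open>The rows of the database\<close>

definition rows :: "nat \<Rightarrow> nat \<Rightarrow> (nat \<Rightarrow> nat) set" where
  "rows K n = PiE {1..n} (\<lambda>_. {1..K})"

text \<open>\<open>(\<gamma> I + (1 - \<gamma>) U)^k = \<gamma>^k I + (1 - \<gamma>^k) U\<close>, because \<open>U^2 = U\<close>.\<close>
definition trans_prob_pow :: "real \<Rightarrow> (nat \<Rightarrow> real) \<Rightarrow> nat \<Rightarrow> nat \<Rightarrow> nat \<Rightarrow> real" where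
  "trans_prob_pow \<gamma> u k a c = \<gamma>^k * of_bool (a = c) + (1 - \<gamma>^k) * u c"

lemma finite_rows: "finite (rows K n)"
  unfolding rows_def by (simp add: finite_PiE)

lemma finite_databases: "finite (databases K m n)"
  unfolding databases_def by (simp add: finite_PiE)

lemma rows_mem: "x \<in> rows K n \<Longrightarrow> j \<in> {1..n} \<Longrightarrow> x j \<in> {1..K}"
  unfolding rows_def by (auto simp: PiE_iff)

lemma sum_rows_Suc:
  "(\<Sum>x\<in>rows K (Suc n). F x) = (\<Sum>(b, x)\<in>{1..K} \<times> rows K n. F (x(Suc n := b)))"
proof -
  have "{1..Suc n} = insert (Suc n) {1..n}" by auto
  then show ?thesis unfolding rows_def
    by (intro sum.reindex_bij_witness[of _ "\<lambda>(b, x). x(Suc n := b)" "\<lambda>x. (x (Suc n), x(Suc n := undefined))"])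
      (auto simp: PiE_def extensional_def)
qed

lemma row_prob_fun_upd_Suc:
  assumes "n \<ge> 1"
  shows "row_prob \<gamma> u (Suc n) (x(Suc n := b)) = row_prob \<gamma> u n x * trans_prob \<gamma> u (x n) b"
proof -
  have "{1..<Suc n} = insert n {1..<n}" using assms by auto
  moreover have "(\<Prod>j\<in>{1..<n}. trans_prob \<gamma> u ((x(Suc n := b)) j) ((x(Suc n := b)) (Suc j)))
      = (\<Prod>j\<in>{1..<n}. trans_prob \<gamma> u (x j) (x (Suc j)))"
    by (intro prod.cong) auto
  ultimately show ?thesis
    using assms unfolding row_prob_def by (simp add: algebra_simps)
qed

locale markov_db =
  fixes K :: nat and u :: "nat \<Rightarrow> real" and \<gamma> :: real
  assumes two_le_K: "K \<ge> 2"
    and u_pos: "\<forall>j\<in>{1..K}. u j > 0"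
    and sum_u: "(\<Sum>j\<in>{1..K}. u j) = 1"
    and gamma_less_1: "\<gamma> < 1"
    and diag_pos: "\<forall>j\<in>{1..K}. \<gamma> + (1 - \<gamma>) * u j > 0"
begin

abbreviation "P \<equiv> trans_prob \<gamma> u"

abbreviation "P_pow \<equiv> trans_prob_pow \<gamma> u"

definition expect :: "nat \<Rightarrow> ((nat \<Rightarrow> nat) \<Rightarrow> real) \<Rightarrow> real" where
  "expect n \<phi> = (\<Sum>x\<in>rows K n. row_prob \<gamma> u n x * \<phi> x)"

text \<open>The trace \<open>K \<gamma> + 1 - \<gamma>\<close> of the transition matrix is positive.\<close>
lemma gamma_greater_minus_1: "\<gamma> > -1"
proof -
  have "0 < (\<Sum>j\<in>{1..K}. \<gamma> + (1 - \<gamma>) * u j)"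
    using diag_pos two_le_K by (intro sum_pos) auto
  also have "\<dots> = real K * \<gamma> + (1 - \<gamma>)"
    using sum_u by (simp add: sum.distrib flip: sum_distrib_left)
  finally have "\<gamma> * (real K - 1) > -1"
    by (simp add: algebra_simps)
  moreover have "real K - 1 \<ge> 1"
    using two_le_K by simp
  ultimately show ?thesis
    by (cases "\<gamma> \<ge> 0") (auto intro: less_le_trans[of _ "\<gamma> * (real K - 1)"] simp: mult_le_cancel_left1)
qed

lemma trans_prob_pos: "a \<in> {1..K} \<Longrightarrow> b \<in> {1..K} \<Longrightarrow> P a b > 0"
  using u_pos diag_pos gamma_less_1 unfolding trans_prob_def by (cases "a = b") auto

lemma sum_trans_prob: "a \<in> {1..K} \<Longrightarrow> (\<Sum>b\<in>{1..K}. P a b) = 1"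
  using sum_u unfolding trans_prob_def by (simp add: sum.distrib flip: sum_distrib_left)

lemma stationary_trans_prob_pow:
  assumes "c \<in> {1..K}"
  shows "(\<Sum>a\<in>{1..K}. u a * P_pow k a c) = u c"
proof -
  have "(\<Sum>a\<in>{1..K}. u a * P_pow k a c)
      = (\<Sum>a\<in>{1..K}. \<gamma>^k * (of_bool (a = c) * u a) + (1 - \<gamma>^k) * u c * u a)"
    unfolding trans_prob_pow_def by (intro sum.cong) (auto simp: algebra_simps)
  also have "\<dots> = \<gamma>^k * (\<Sum>a\<in>{1..K}. of_bool (a = c) * u a) + (1 - \<gamma>^k) * u c * (\<Sum>a\<in>{1..K}. u a)"
    by (simp only: sum.distrib sum_distrib_left)
  finally show ?thesis
    using assms sum_u by (simp add: sum_of_bool_eq_mult algebra_simps)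
qed

lemma trans_prob_pow_Suc:
  assumes "a \<in> {1..K}" "c \<in> {1..K}"
  shows "(\<Sum>b\<in>{1..K}. P_pow k a b * P b c) = P_pow (Suc k) a c"
proof -
  have "P = P_pow 1"
    by (simp add: fun_eq_iff trans_prob_def trans_prob_pow_def)
  then have stationary: "(\<Sum>b\<in>{1..K}. u b * P b c) = u c"
    using stationary_trans_prob_pow[OF assms(2)] by simp
  have "(\<Sum>b\<in>{1..K}. P_pow k a b * P b c)
      = (\<Sum>b\<in>{1..K}. \<gamma>^k * (of_bool (b = a) * P b c) + (1 - \<gamma>^k) * (u b * P b c))"
    unfolding trans_prob_pow_def by (intro sum.cong) (auto simp: algebra_simps)
  also have "\<dots> = \<gamma>^k * (\<Sum>b\<in>{1..K}. of_bool (b = a) * P b c) + (1 - \<gamma>^k) * (\<Sum>b\<in>{1..K}. u b * P b c)"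
    by (simp only: sum.distrib sum_distrib_left)
  also have "\<dots> = \<gamma>^k * P a c + (1 - \<gamma>^k) * u c"
    using assms stationary by (simp add: sum_of_bool_eq_mult)
  also have "\<dots> = P_pow (Suc k) a c"
    by (simp add: trans_prob_def trans_prob_pow_def algebra_simps)
  finally show ?thesis .
qed

text \<open>For \<open>n = 0\<close> the only row is \<open>\<lambda>_. undefined\<close>, whose probability \<open>u undefined\<close> is junk;
  hence the hypothesis \<open>n \<ge> 1\<close> here and below.\<close>
lemma row_prob_nonneg:
  assumes "n \<ge> 1" "x \<in> rows K n"
  shows "row_prob \<gamma> u n x \<ge> 0"
proof -
  have "u (x 1) \<ge> 0"
    using assms u_pos rows_mem[OF assms(2), of 1] by (auto intro: less_imp_le)
  moreover have "(\<Prod>j\<in>{1..<n}. P (x j) (x (Suc j))) \<ge> 0"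
    using rows_mem[OF assms(2)] by (intro prod_nonneg less_imp_le trans_prob_pos) auto
  ultimately show ?thesis
    unfolding row_prob_def by simp
qed

lemma db_prob_nonneg: "n \<ge> 1 \<Longrightarrow> D \<in> databases K m n \<Longrightarrow> db_prob \<gamma> u m n D \<ge> 0"
  unfolding db_prob_def databases_def rows_def[symmetric]
  by (intro prod_nonneg row_prob_nonneg) (auto simp: PiE_iff)

lemma expect_cong: "(\<And>x. x \<in> rows K n \<Longrightarrow> \<phi> x = \<psi> x) \<Longrightarrow> expect n \<phi> = expect n \<psi>"
  unfolding expect_def by (intro sum.cong) auto

lemma expect_mono: "n \<ge> 1 \<Longrightarrow> (\<And>x. x \<in> rows K n \<Longrightarrow> \<phi> x \<le> \<psi> x) \<Longrightarrow> expect n \<phi> \<le> expect n \<psi>"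
  unfolding expect_def by (intro sum_mono mult_left_mono) (auto intro: row_prob_nonneg)

lemma expect_cmult: "expect n (\<lambda>x. c * \<phi> x) = c * expect n \<phi>"
  unfolding expect_def by (simp add: sum_distrib_left mult_ac)

lemma expect_of_bool: "expect n (\<lambda>x. of_bool (Q x)) = sum (row_prob \<gamma> u n) {x\<in>rows K n. Q x}"
  unfolding expect_def using finite_rows by (simp add: sum.inter_filter of_bool_def if_distrib cong: if_cong)

lemma expect_1_state:
  assumes "a \<in> {1..K}"
  shows "expect 1 (\<lambda>x. of_bool (x 1 = a)) = u a"
proof -
  have "expect 1 (\<lambda>x. of_bool (x 1 = a)) = (\<Sum>b\<in>{1..K}. u b * of_bool (b = a))"
    unfolding expect_def row_prob_def
    by (rule sum.reindex_bij_witness[of _ "\<lambda>b. (\<lambda>_. undefined)(1 := b)" "\<lambda>x. x 1"])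
      (auto simp: rows_def PiE_def extensional_def fun_eq_iff)
  also have "\<dots> = u a"
    using assms sum_of_bool_eq_mult[of "{1..K}" a u] by (simp add: mult.commute)
  finally show ?thesis .
qed

lemma expect_Suc:
  assumes "n \<ge> 1"
  shows "expect (Suc n) \<phi> = expect n (\<lambda>x. \<Sum>b\<in>{1..K}. P (x n) b * \<phi> (x(Suc n := b)))"
proof -
  have "expect (Suc n) \<phi>
      = (\<Sum>(b, x)\<in>{1..K} \<times> rows K n. row_prob \<gamma> u (Suc n) (x(Suc n := b)) * \<phi> (x(Suc n := b)))"
    unfolding expect_def by (rule sum_rows_Suc)
  also have "\<dots> = (\<Sum>x\<in>rows K n. \<Sum>b\<in>{1..K}. row_prob \<gamma> u (Suc n) (x(Suc n := b)) * \<phi> (x(Suc n := b)))"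
    by (subst sum.swap) (simp add: sum.cartesian_product)
  also have "\<dots> = expect n (\<lambda>x. \<Sum>b\<in>{1..K}. P (x n) b * \<phi> (x(Suc n := b)))"
    unfolding expect_def using assms by (simp add: row_prob_fun_upd_Suc sum_distrib_left mult_ac)
  finally show ?thesis .
qed

lemma expect_split_last_state:
  assumes "n \<ge> 1"
  shows "expect n (\<lambda>x. \<phi> x * \<psi> (x n)) = (\<Sum>a\<in>{1..K}. expect n (\<lambda>x. \<phi> x * of_bool (x n = a)) * \<psi> a)"
proof -
  have "\<phi> x * \<psi> (x n) = (\<Sum>a\<in>{1..K}. \<phi> x * of_bool (x n = a) * \<psi> a)" if "x \<in> rows K n" for x
  proof -
    have "x n \<in> {1..K}"
      using assms by (intro rows_mem[OF that]) auto
    then have "\<phi> x * \<psi> (x n) = \<phi> x * (\<Sum>a\<in>{1..K}. of_bool (a = x n) * \<psi> a)"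
      by (simp add: sum_of_bool_eq_mult)
    also have "\<dots> = (\<Sum>a\<in>{1..K}. \<phi> x * of_bool (x n = a) * \<psi> a)"
      unfolding sum_distrib_left by (intro sum.cong) auto
    finally show ?thesis .
  qed
  then have "expect n (\<lambda>x. \<phi> x * \<psi> (x n))
      = (\<Sum>x\<in>rows K n. \<Sum>a\<in>{1..K}. row_prob \<gamma> u n x * (\<phi> x * of_bool (x n = a) * \<psi> a))"
    unfolding expect_def by (intro sum.cong refl) (simp add: sum_distrib_left)
  also have "\<dots> = (\<Sum>a\<in>{1..K}. \<Sum>x\<in>rows K n. row_prob \<gamma> u n x * (\<phi> x * of_bool (x n = a) * \<psi> a))"
    by (rule sum.swap)
  finally show ?thesis
    unfolding expect_def sum_distrib_right by (simp only: mult.assoc)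
qed

text \<open>Chapman--Kolmogorov, with the closed form of the \<open>(n - i)\<close>-step transition
  probabilities.\<close>
lemma expect_last_state:
  assumes "1 \<le> i" "i \<le> n" "c \<in> {1..K}" and prefix: "\<And>k x b. i < k \<Longrightarrow> \<phi> (x(k := b)) = \<phi> x"
  shows "expect n (\<lambda>x. \<phi> x * of_bool (x n = c))
       = (\<Sum>a\<in>{1..K}. expect i (\<lambda>x. \<phi> x * of_bool (x i = a)) * P_pow (n - i) a c)"
  using assms(2,3)
proof (induction n arbitrary: c rule: dec_induct)
  case base
  have "(\<Sum>a\<in>{1..K}. expect i (\<lambda>x. \<phi> x * of_bool (x i = a)) * P_pow 0 a c)
      = (\<Sum>a\<in>{1..K}. of_bool (a = c) * expect i (\<lambda>x. \<phi> x * of_bool (x i = a)))"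
    by (intro sum.cong) (auto simp: trans_prob_pow_def)
  also have "\<dots> = expect i (\<lambda>x. \<phi> x * of_bool (x i = c))"
    using base by (rule sum_of_bool_eq_mult[OF finite_atLeastAtMost])
  finally show ?case by simp
next
  case (step n)
  have n: "n \<ge> 1"
    using step.hyps assms(1) by simp
  have "expect (Suc n) (\<lambda>x. \<phi> x * of_bool (x (Suc n) = c)) = expect n (\<lambda>x. \<phi> x * P (x n) c)"
    unfolding expect_Suc[OF n]
  proof (intro expect_cong)
    fix x
    have "(\<Sum>b\<in>{1..K}. P (x n) b * (\<phi> (x(Suc n := b)) * of_bool ((x(Suc n := b)) (Suc n) = c)))
        = (\<Sum>b\<in>{1..K}. of_bool (b = c) * (\<phi> x * P (x n) b))"
      using step.hyps prefix by (intro sum.cong) auto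
    then show "(\<Sum>b\<in>{1..K}. P (x n) b * (\<phi> (x(Suc n := b)) * of_bool ((x(Suc n := b)) (Suc n) = c)))
        = \<phi> x * P (x n) c"
      using step.prems by (simp add: sum_of_bool_eq_mult)
  qed
  also have "\<dots> = (\<Sum>b\<in>{1..K}. expect n (\<lambda>x. \<phi> x * of_bool (x n = b)) * P b c)"
    by (rule expect_split_last_state[OF n, of \<phi> "\<lambda>b. P b c"])
  also have "\<dots> = (\<Sum>b\<in>{1..K}. \<Sum>a\<in>{1..K}. expect i (\<lambda>x. \<phi> x * of_bool (x i = a)) * (P_pow (n - i) a b * P b c))"
    by (intro sum.cong refl) (simp add: step.IH sum_distrib_right mult.assoc)
  also have "\<dots> = (\<Sum>a\<in>{1..K}. expect i (\<lambda>x. \<phi> x * of_bool (x i = a)) * (\<Sum>b\<in>{1..K}. P_pow (n - i) a b * P b c))"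
    by (subst sum.swap) (simp add: sum_distrib_left)
  also have "\<dots> = (\<Sum>a\<in>{1..K}. expect i (\<lambda>x. \<phi> x * of_bool (x i = a)) * P_pow (Suc n - i) a c)"
  proof (intro sum.cong refl)
    fix a assume "a \<in> {1..K}"
    then show "expect i (\<lambda>x. \<phi> x * of_bool (x i = a)) * (\<Sum>b\<in>{1..K}. P_pow (n - i) a b * P b c)
        = expect i (\<lambda>x. \<phi> x * of_bool (x i = a)) * P_pow (Suc n - i) a c"
      using trans_prob_pow_Suc[OF \<open>a \<in> {1..K}\<close> step.prems] step.hyps by (simp add: Suc_diff_le)
  qed
  finally show ?case .
qed

lemma expect_state:
  assumes "n \<ge> 1" "c \<in> {1..K}"
  shows "expect n (\<lambda>x. of_bool (x n = c)) = u c"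
proof -
  have "expect n (\<lambda>x. 1 * of_bool (x n = c))
      = (\<Sum>a\<in>{1..K}. expect 1 (\<lambda>x. 1 * of_bool (x 1 = a)) * P_pow (n - 1) a c)"
    using assms by (intro expect_last_state) auto
  also have "\<dots> = (\<Sum>a\<in>{1..K}. u a * P_pow (n - 1) a c)"
    by (rule sum.cong[OF refl]) (simp only: mult_1 expect_1_state)
  also have "\<dots> = u c"
    using assms(2) by (rule stationary_trans_prob_pow)
  finally show ?thesis by simp
qed

lemma expect_1:
  assumes "n \<ge> 1"
  shows "expect n (\<lambda>_. 1) = 1"
proof -
  have "expect n (\<lambda>x. 1 * 1) = (\<Sum>a\<in>{1..K}. expect n (\<lambda>x. 1 * of_bool (x n = a)) * 1)"
    by (rule expect_split_last_state[OF assms, of "\<lambda>_. 1" "\<lambda>_. 1"])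
  also have "\<dots> = (\<Sum>a\<in>{1..K}. u a)"
    using assms by (intro sum.cong refl) (simp add: expect_state)
  finally show ?thesis
    using sum_u by simp
qed

lemma expect_extend:
  assumes "n \<ge> 1" "\<And>x b. \<phi> (x(Suc n := b)) = \<phi> x"
  shows "expect (Suc n) \<phi> = expect n \<phi>"
  unfolding expect_Suc[OF assms(1)] assms(2)
proof (intro expect_cong)
  fix x assume x: "x \<in> rows K n"
  then have "x n \<in> {1..K}"
    using assms(1) by (intro rows_mem[OF x]) auto
  then show "(\<Sum>b\<in>{1..K}. P (x n) b * \<phi> x) = \<phi> x"
    using sum_trans_prob by (simp flip: sum_distrib_right)
qed

lemma expect_restrict:
  assumes "1 \<le> j" "j \<le> n" "\<And>k x b. j < k \<Longrightarrow> \<phi> (x(k := b)) = \<phi> x"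
  shows "expect n \<phi> = expect j \<phi>"
  using assms(2)
proof (induction n rule: dec_induct)
  case (step n)
  have "expect (Suc n) \<phi> = expect n \<phi>"
    using step.hyps assms by (intro expect_extend) auto
  with step.IH show ?case by simp
qed simp

lemma expect_two_states:
  assumes "1 \<le> i" "i < j" "j \<le> n" "a \<in> {1..K}" "b \<in> {1..K}"
  shows "expect n (\<lambda>x. of_bool (x i = a) * of_bool (x j = b)) = u a * P_pow (j - i) a b"
proof -
  have "expect n (\<lambda>x. of_bool (x i = a) * of_bool (x j = b))
      = expect j (\<lambda>x. of_bool (x i = a) * of_bool (x j = b))"
    using assms by (intro expect_restrict) auto
  also have "\<dots> = (\<Sum>a'\<in>{1..K}. expect i (\<lambda>x. of_bool (x i = a) * of_bool (x i = a')) * P_pow (j - i) a' b)"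
    using assms by (intro expect_last_state) auto
  also have "\<dots> = (\<Sum>a'\<in>{1..K}. of_bool (a' = a) * (expect i (\<lambda>x. of_bool (x i = a)) * P_pow (j - i) a' b))"
  proof (intro sum.cong refl)
    fix a'
    have "expect i (\<lambda>x. of_bool (x i = a) * of_bool (x i = a')) = expect i (\<lambda>x. of_bool (a' = a) * of_bool (x i = a))"
      by (intro expect_cong) auto
    then show "expect i (\<lambda>x. of_bool (x i = a) * of_bool (x i = a')) * P_pow (j - i) a' b
        = of_bool (a' = a) * (expect i (\<lambda>x. of_bool (x i = a)) * P_pow (j - i) a' b)"
      by (simp add: expect_cmult)
  qed
  also have "\<dots> = expect i (\<lambda>x. of_bool (x i = a)) * P_pow (j - i) a b"
    using assms(4) by (rule sum_of_bool_eq_mult[OF finite_atLeastAtMost])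
  also have "\<dots> = u a * P_pow (j - i) a b"
    using assms by (simp add: expect_state)
  finally show ?thesis .
qed

end

lemma markov_db_intro:
  fixes u :: "nat \<Rightarrow> real"
  assumes "K \<ge> 2" "\<forall>j\<in>{1..K}. u j > 0" "(\<Sum>j\<in>{1..K}. u j) = 1"
    and "- Min ((\<lambda>j. u j / (1 - u j)) ` {1..K}) < \<gamma>" "\<gamma> < 1"
  shows "markov_db K u \<gamma>"
proof
  show "\<forall>j\<in>{1..K}. \<gamma> + (1 - \<gamma>) * u j > 0"
  proof
    fix j assume j: "j \<in> {1..K}"
    define j' where "j' = (if j = 1 then 2 else (1::nat))"
    have j': "j' \<in> {1..K}" "j' \<noteq> j"
      using assms(1) j by (auto simp: j'_def)
    have "u j + u j' = sum u {j, j'}"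
      using j' by simp
    also have "\<dots> \<le> sum u {1..K}"
      using j j' assms(2) by (intro sum_mono2) (auto intro: less_imp_le)
    finally have "u j + u j' \<le> 1"
      using assms(3) by simp
    moreover have "u j' > 0"
      using assms(2) j' by auto
    ultimately have u_less_1: "u j < 1"
      by simp
    have "- (u j / (1 - u j)) < \<gamma>"
      using assms(4) Min_le[of "(\<lambda>j. u j / (1 - u j)) ` {1..K}" "u j / (1 - u j)"] j by auto
    then show "\<gamma> + (1 - \<gamma>) * u j > 0"
      using u_less_1 by (simp add: field_simps)
  qed
qed (use assms in auto)

section \<open>Collisions of column histograms\<close>

lemma col_hist_eq: "col_hist m D j = card {k\<in>{1..m}. D k j \<noteq> 1}"
  unfolding col_hist_def collapse_def by (intro arg_cong[where f = card]) auto

context markov_db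
begin

text \<open>A lower bound for the probability that \<open>x i = 1\<close> and \<open>x j = 2\<close>, for \<open>i < j\<close>.\<close>
definition mixing_const :: real where
  "mixing_const = u 1 * u 2 * (1 - \<bar>\<gamma>\<bar>)"

lemma mixing_const_pos: "mixing_const > 0"
  using u_pos two_le_K gamma_less_1 gamma_greater_minus_1 unfolding mixing_const_def
  by (auto intro!: mult_pos_pos)

lemma mixing_const_le_trans_prob_pow:
  assumes "k \<ge> 1"
  shows "mixing_const \<le> u 1 * P_pow k 1 2"
proof -
  have "\<gamma>^k \<le> \<bar>\<gamma>\<bar>^k"
    by (metis abs_ge_self power_abs abs_le_iff)
  also have "\<dots> \<le> \<bar>\<gamma>\<bar>"
    using assms gamma_less_1 gamma_greater_minus_1 power_decreasing[of 1 k "\<bar>\<gamma>\<bar>"] by auto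
  finally show ?thesis
    using u_pos two_le_K unfolding mixing_const_def trans_prob_pow_def by (simp add: mult_left_mono)
qed

lemma prob_col_hist_eq_le:
  assumes "1 \<le> i" "i < j" "j \<le> n"
  shows "(\<Sum>D\<in>databases K m n. db_prob \<gamma> u m n D * of_bool (col_hist m D i = col_hist m D j))
           \<le> sqrt (2 / ((real m + 1) * mixing_const))"
proof -
  have n: "n \<ge> 1"
    using assms by simp
  define f :: "(nat \<Rightarrow> nat) \<Rightarrow> int" where "f x = of_bool (x i \<noteq> 1) - of_bool (x j \<noteq> 1)" for x
  have "{k\<in>{1..m}. f (D k) = 1} = {k\<in>{1..m}. D k i \<noteq> 1 \<and> \<not> D k j \<noteq> 1}"
      "{k\<in>{1..m}. f (D k) = -1} = {k\<in>{1..m}. D k j \<noteq> 1 \<and> \<not> D k i \<noteq> 1}" for D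
    by (auto simp: f_def)
  then have "col_hist m D i = col_hist m D j \<longleftrightarrow>
      card {k\<in>{1..m}. f (D k) = 1} = card {k\<in>{1..m}. f (D k) = -1}" for D
    unfolding col_hist_eq by (simp only:) (rule card_eq_iff_card_diff_eq[OF finite_atLeastAtMost])
  then have "(\<Sum>D\<in>databases K m n. db_prob \<gamma> u m n D * of_bool (col_hist m D i = col_hist m D j))
      = (\<Sum>D\<in>PiE {1..m} (\<lambda>_. rows K n). (\<Prod>k\<in>{1..m}. row_prob \<gamma> u n (D k))
          * of_bool (card {k\<in>{1..m}. f (D k) = 1} = card {k\<in>{1..m}. f (D k) = -1}))"
    by (simp add: databases_def db_prob_def rows_def)
  also have "\<dots> \<le> sqrt (2 / ((real (card {1..m}) + 1) * mixing_const))"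
  proof (rule prob_balanced_signs_le[where w = "row_prob \<gamma> u n" and f = f])
    show "sum (row_prob \<gamma> u n) (rows K n) \<le> 1"
      using expect_1[OF n] by (simp add: expect_def)
    have "mixing_const \<le> u 1 * P_pow (j - i) 1 2"
      using assms by (intro mixing_const_le_trans_prob_pow) simp
    also have "\<dots> = expect n (\<lambda>x. of_bool (x i = 1) * of_bool (x j = 2))"
      using assms two_le_K by (intro expect_two_states[symmetric]) auto
    also have "\<dots> \<le> expect n (\<lambda>x. of_bool (f x \<noteq> 0))"
      using n by (intro expect_mono) (auto simp: f_def)
    finally show "mixing_const \<le> sum (row_prob \<gamma> u n) {x\<in>rows K n. f x \<noteq> 0}"
      by (simp add: expect_of_bool)
  qed (use n finite_rows row_prob_nonneg mixing_const_pos in \<open>auto simp: f_def\<close>)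
  finally show ?thesis by simp
qed

lemma collision_prob_le:
  assumes "n \<ge> 1"
  shows "collision_prob K \<gamma> u m n \<le> real n ^ 2 * sqrt (2 / ((real m + 1) * mixing_const))"
proof -
  define pairs where "pairs = {p \<in> {1..n} \<times> {1..n}. fst p < snd p}"
  have pairs_iff: "(\<exists>i\<in>{1..n}. \<exists>j\<in>{1..n}. i \<noteq> j \<and> H i = H j) \<longleftrightarrow> (\<exists>p\<in>pairs. H (fst p) = H (snd p))"
    for H :: "nat \<Rightarrow> nat"
  proof
    assume "\<exists>i\<in>{1..n}. \<exists>j\<in>{1..n}. i \<noteq> j \<and> H i = H j"
    then obtain i j where "i \<in> {1..n}" "j \<in> {1..n}" "i \<noteq> j" "H i = H j"
      by blast
    then show "\<exists>p\<in>pairs. H (fst p) = H (snd p)"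
      by (intro bexI[of _ "(min i j, max i j)"]) (auto simp: pairs_def min_def max_def)
  next
    assume "\<exists>p\<in>pairs. H (fst p) = H (snd p)"
    then obtain i j where "(i, j) \<in> pairs" "H i = H j"
      by auto
    then show "\<exists>i\<in>{1..n}. \<exists>j\<in>{1..n}. i \<noteq> j \<and> H i = H j"
      by (intro bexI[of _ i] bexI[of _ j]) (auto simp: pairs_def)
  qed
  have "collision_prob K \<gamma> u m n = (\<Sum>D\<in>databases K m n.
      if \<exists>i\<in>{1..n}. \<exists>j\<in>{1..n}. i \<noteq> j \<and> col_hist m D i = col_hist m D j then db_prob \<gamma> u m n D else 0)"
    unfolding collision_prob_def by (rule sum.inter_filter[OF finite_databases])
  also have "\<dots> = (\<Sum>D\<in>databases K m n.
      db_prob \<gamma> u m n D * of_bool (\<exists>p\<in>pairs. col_hist m D (fst p) = col_hist m D (snd p)))"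
    unfolding pairs_iff by (intro sum.cong) auto
  also have "\<dots> \<le> (\<Sum>p\<in>pairs. \<Sum>D\<in>databases K m n.
      db_prob \<gamma> u m n D * of_bool (col_hist m D (fst p) = col_hist m D (snd p)))"
    using assms by (intro sum_of_bool_bex_le) (auto simp: pairs_def db_prob_nonneg)
  also have "\<dots> \<le> (\<Sum>p\<in>pairs. sqrt (2 / ((real m + 1) * mixing_const)))"
    by (intro sum_mono prob_col_hist_eq_le) (auto simp: pairs_def)
  also have "\<dots> \<le> real n ^ 2 * sqrt (2 / ((real m + 1) * mixing_const))"
  proof -
    have "card pairs \<le> card ({1..n} \<times> {1..n})"
      unfolding pairs_def by (intro card_mono) auto
    then have "real (card pairs) \<le> real n ^ 2"
      by (simp add: power2_eq_square flip: of_nat_mult)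
    then show ?thesis
      using mixing_const_pos by (simp add: mult_right_mono)
  qed
  finally show ?thesis .
qed

end

lemma sq_mult_sqrt_divide_tendsto_0:
  fixes m :: "nat \<Rightarrow> nat"
  assumes "(\<lambda>n. real n ^ 4) \<in> o(\<lambda>n. real (m n))"
  shows "(\<lambda>n. real n ^ 2 * sqrt (c / (real (m n) + 1))) \<longlonglongrightarrow> 0"
proof -
  have "(\<lambda>n. real (m n)) \<in> O(\<lambda>n. real (m n) + 1)"
    by (intro bigoI[of _ 1]) auto
  with assms have "(\<lambda>n. real n ^ 4) \<in> o(\<lambda>n. real (m n) + 1)"
    by (rule landau_o.small_big_trans)
  then have "(\<lambda>n. real n ^ 4 / (real (m n) + 1)) \<longlonglongrightarrow> 0"
    by (rule smalloD_tendsto)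
  then have "(\<lambda>n. sqrt (c * (real n ^ 4 / (real (m n) + 1)))) \<longlonglongrightarrow> 0"
    using tendsto_real_sqrt tendsto_mult_right_zero by fastforce
  moreover have "sqrt (c * (real n ^ 4 / (real (m n) + 1))) = real n ^ 2 * sqrt (c / (real (m n) + 1))" for n
  proof -
    have "c * (real n ^ 4 / (real (m n) + 1)) = (real n ^ 2)^2 * (c / (real (m n) + 1))"
      by (simp flip: power_mult)
    then have "sqrt (c * (real n ^ 4 / (real (m n) + 1))) = sqrt ((real n ^ 2)^2) * sqrt (c / (real (m n) + 1))"
      by (simp only: real_sqrt_mult)
    moreover have "sqrt ((real n ^ 2)^2) = real n ^ 2"
      by (rule real_sqrt_unique) simp_all
    ultimately show ?thesis
      by (simp only:)
  qed
  ultimately show ?thesis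
    by simp
qed

theorem lemma1:
  fixes K :: nat and u :: "nat \<Rightarrow> real" and \<gamma> :: real and m :: "nat \<Rightarrow> nat"
  assumes "K \<ge> 2"
    and "\<forall>j\<in>{1..K}. u j > 0"
    and "(\<Sum>j\<in>{1..K}. u j) = 1"
    and "- Min ((\<lambda>j. u j / (1 - u j)) ` {1..K}) < \<gamma>" and "\<gamma> < 1"
    and "(\<lambda>n. real n ^ 4) \<in> o(\<lambda>n. real (m n))"
  shows "(\<lambda>n. collision_prob K \<gamma> u (m n) n) \<longlonglongrightarrow> 0"
proof -
  interpret markov_db K u \<gamma>
    using assms(1-5) by (rule markov_db_intro)
  have bound: "(\<lambda>n. real n ^ 2 * sqrt (2 / mixing_const / (real (m n) + 1))) \<longlonglongrightarrow> 0"
    using assms(6) by (rule sq_mult_sqrt_divide_tendsto_0)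
  have bound_eq: "2 / mixing_const / (real k + 1) = 2 / ((real k + 1) * mixing_const)" for k
    by (simp add: mult.commute)
  show ?thesis
  proof (rule tendsto_sandwich[OF _ _ tendsto_const bound])
    show "\<forall>\<^sub>F n in sequentially. 0 \<le> collision_prob K \<gamma> u (m n) n"
      using eventually_ge_at_top[of 1]
      by eventually_elim (auto simp: collision_prob_def intro!: sum_nonneg db_prob_nonneg)
    show "\<forall>\<^sub>F n in sequentially. collision_prob K \<gamma> u (m n) n
        \<le> real n ^ 2 * sqrt (2 / mixing_const / (real (m n) + 1))"
      using eventually_ge_at_top[of 1]
      unfolding bound_eq by eventually_elim (rule collision_prob_le)
  qed
qed

end
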